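(* Let $n\geqslant 2$ and $\alpha,\beta\in\mathbf{I}\mathbb{N}_{\infty}^n$. Then: (i) $\alpha\mathscr{L}\beta$ iff there exists $\sigma\in H(\mathbb{I})$ with $\alpha=\sigma\beta$; (ii) $\alpha\mathscr{R}\beta$ iff there exists $\sigma\in H(\mathbb{I})$ with $\alpha=\beta\sigma$; (iii) $\alpha\mathscr{H}\beta$ iff there exist $\sigma_1,\sigma_2\in H(\mathbb{I})$ with $\alpha=\sigma_1\beta$ and $\alpha=\beta\sigma_2$; (iv) $\alpha\mathscr{D}\beta$ iff there exist $\sigma_1,\sigma_2\in H(\mathbb{I})$ with $\alpha=\sigma_1\beta\sigma_2$; (v) $\mathscr{D}=\mathscr{J}$ on $\mathbf{I}\mathbb{N}_{\infty}^n$; (vi) every $\mathscr{J}$-class of $\mathbf{I}\mathbb{N}_{\infty}^n$ is finite and consists of pairwise incomparable elements with respect to the natural partial order $\preccurlyeq$.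
   Context: $\mathbb{N}=\{1,2,3,\ldots\}$, $n\geqslant 2$, and $\mathbb{N}^n$ carries the Euclidean metric $d$. A partial isometry of $\mathbb{N}^n$ is an injective partial map $\alpha\colon\mathbb{N}^n\rightharpoonup\mathbb{N}^n$ with $d((\mathbf{x})\alpha,(\mathbf{y})\alpha)=d(\mathbf{x},\mathbf{y})$ for all $\mathbf{x},\mathbf{y}\in\operatorname{dom}\alpha$; it is cofinite if $\mathbb{N}^n\setminus\operatorname{dom}\alpha$ and $\mathbb{N}^n\setminus\operatorname{ran}\alpha$ are finite. $\mathbf{I}\mathbb{N}_{\infty}^n$ is the monoid of all partial cofinite isometries of $\mathbb{N}^n$ under composition of partial maps written on the right. Its identity is the identity map $\mathbb{I}$ of $\mathbb{N}^n$ and $H(\mathbb{I})$ is its group of units. Green's relations on a semigroup $S$: $a\mathscr{R}b$ iff $aS^1=bS^1$; $a\mathscr{L}b$ iff $S^1a=S^1b$; $a\mathscr{J}b$ iff $S^1aS^1=S^1bS^1$; $\mathscr{D}=\mathscr{L}\circ\mathscr{R}$; $\mathscr{H}=\mathscr{L}\cap\mathscr{R}$. The natural partial order on the inverse semigroup $\mathbf{I}\mathbb{N}_{\infty}^n$ is $s\preccurlyeq t$ iff $s=te$ for some idempotent $e$. *)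

theory Defs
  imports "HOL-Analysis.Analysis"
begin

text \<open>Points of N^n (N = {1,2,...}) with index type 'n, n = CARD('n).\<close>
definition Npts :: "(nat ^ 'n) set" where
  "Npts = {x. \<forall>i. 1 \<le> x $ i}"

definition edist :: "nat ^ 'n \<Rightarrow> nat ^ 'n \<Rightarrow> real" where
  "edist x y = sqrt (\<Sum>i\<in>UNIV. (real (x $ i) - real (y $ i))\<^sup>2)"

definition partial_isometry :: "(nat ^ 'n \<rightharpoonup> nat ^ 'n) \<Rightarrow> bool" where
  "partial_isometry a \<longleftrightarrow> dom a \<subseteq> Npts \<and> ran a \<subseteq> Npts \<and> inj_on a (dom a) \<and>
     (\<forall>x\<in>dom a. \<forall>y\<in>dom a. edist (the (a x)) (the (a y)) = edist x y)"

definition cofinite_pi :: "(nat ^ 'n \<rightharpoonup> nat ^ 'n) \<Rightarrow> bool" where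
  "cofinite_pi a \<longleftrightarrow> partial_isometry a \<and> finite (Npts - dom a) \<and> finite (Npts - ran a)"

definition INinf :: "(nat ^ 'n \<rightharpoonup> nat ^ 'n) set" where
  "INinf = {a. cofinite_pi a}"

text \<open>Composition of partial maps written on the right: x(ab) = (xa)b.\<close>
definition rcomp :: "('a \<rightharpoonup> 'a) \<Rightarrow> ('a \<rightharpoonup> 'a) \<Rightarrow> ('a \<rightharpoonup> 'a)" (infixl "\<cdot>" 70) where
  "a \<cdot> b = b \<circ>\<^sub>m a"

definition Iden :: "nat ^ 'n \<rightharpoonup> nat ^ 'n" where
  "Iden = (\<lambda>x. if x \<in> Npts then Some x else None)"

definition units_IN :: "(nat ^ 'n \<rightharpoonup> nat ^ 'n) set" where
  "units_IN = {s \<in> INinf. \<exists>t\<in>INinf. s \<cdot> t = Iden \<and> t \<cdot> s = Iden}"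

text \<open>Green's relations for a semigroup (carrier S, multiplication m); S^1 a = {a} \<union> S a etc.\<close>
definition left_ideal1 :: "'a set \<Rightarrow> ('a \<Rightarrow> 'a \<Rightarrow> 'a) \<Rightarrow> 'a \<Rightarrow> 'a set" where
  "left_ideal1 S m a = insert a ((\<lambda>s. m s a) ` S)"
definition right_ideal1 :: "'a set \<Rightarrow> ('a \<Rightarrow> 'a \<Rightarrow> 'a) \<Rightarrow> 'a \<Rightarrow> 'a set" where
  "right_ideal1 S m a = insert a ((\<lambda>s. m a s) ` S)"
definition two_ideal1 :: "'a set \<Rightarrow> ('a \<Rightarrow> 'a \<Rightarrow> 'a) \<Rightarrow> 'a \<Rightarrow> 'a set" where
  "two_ideal1 S m a = (\<Union>u\<in>insert a ((\<lambda>s. m s a) ` S). insert u ((\<lambda>t. m u t) ` S))"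

definition greenL :: "'a set \<Rightarrow> ('a \<Rightarrow> 'a \<Rightarrow> 'a) \<Rightarrow> 'a \<Rightarrow> 'a \<Rightarrow> bool" where
  "greenL S m a b \<longleftrightarrow> left_ideal1 S m a = left_ideal1 S m b"
definition greenR :: "'a set \<Rightarrow> ('a \<Rightarrow> 'a \<Rightarrow> 'a) \<Rightarrow> 'a \<Rightarrow> 'a \<Rightarrow> bool" where
  "greenR S m a b \<longleftrightarrow> right_ideal1 S m a = right_ideal1 S m b"
definition greenJ :: "'a set \<Rightarrow> ('a \<Rightarrow> 'a \<Rightarrow> 'a) \<Rightarrow> 'a \<Rightarrow> 'a \<Rightarrow> bool" where
  "greenJ S m a b \<longleftrightarrow> two_ideal1 S m a = two_ideal1 S m b"
definition greenH :: "'a set \<Rightarrow> ('a \<Rightarrow> 'a \<Rightarrow> 'a) \<Rightarrow> 'a \<Rightarrow> 'a \<Rightarrow> bool" where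
  "greenH S m a b \<longleftrightarrow> greenL S m a b \<and> greenR S m a b"
definition greenD :: "'a set \<Rightarrow> ('a \<Rightarrow> 'a \<Rightarrow> 'a) \<Rightarrow> 'a \<Rightarrow> 'a \<Rightarrow> bool" where
  "greenD S m a b \<longleftrightarrow> (\<exists>c\<in>S. greenL S m a c \<and> greenR S m c b)"

definition natord :: "'a set \<Rightarrow> ('a \<Rightarrow> 'a \<Rightarrow> 'a) \<Rightarrow> 'a \<Rightarrow> 'a \<Rightarrow> bool" where
  "natord S m s t \<longleftrightarrow> (\<exists>e\<in>S. m e e = e \<and> s = m t e)"

end

theory Submission
  imports Defs
begin

text \<open>
  Far from the finite set of missing points, a cofinite partial isometry \<alpha> of \<open>\<nat>\<^sup>n\<close> is an
  isometry between full orthant-like regions; comparing distances to a point and its unit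
  neighbours shows that \<alpha> acts as a signed coordinate permutation plus a translation, and
  positivity of coordinates (available since \<open>n \<ge> 2\<close>) kills the signs and the translation.
  So \<alpha> is a coordinate permutation restricted to \<open>dom \<alpha>\<close>: the units are the \<open>n!\<close>
  coordinate permutations and every element extends to a unit.

  The defect (number of points of \<open>\<nat>\<^sup>n\<close> outside the domain) is invariant under multiplication
  by units and strictly drops under proper extension. Hence if \<open>\<alpha> = u\<beta>v\<close> and \<open>\<beta> = u'\<alpha>v'\<close>,
  extending \<open>u, v\<close> to units \<open>\<sigma>, \<tau>\<close> gives \<open>\<alpha> \<subseteq> \<sigma>\<beta>\<tau>\<close> with equal defects, so
  \<open>\<alpha> = \<sigma>\<beta>\<tau>\<close>. This yields all descriptions of Green's relations; J-classes are finite because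
  there are finitely many units, and antichains because idempotents are restrictions of the
  identity.
\<close>

locale monoid_on =
  fixes S :: "'a set" and mult :: "'a \<Rightarrow> 'a \<Rightarrow> 'a" and one :: 'a
  assumes mult_closed: "a \<in> S \<Longrightarrow> b \<in> S \<Longrightarrow> mult a b \<in> S"
    and mult_assoc: "a \<in> S \<Longrightarrow> b \<in> S \<Longrightarrow> c \<in> S \<Longrightarrow> mult (mult a b) c = mult a (mult b c)"
    and one_closed: "one \<in> S"
    and left_one: "a \<in> S \<Longrightarrow> mult one a = a"
    and right_one: "a \<in> S \<Longrightarrow> mult a one = a"
begin

definition units :: "'a set" where
  "units = {s \<in> S. \<exists>t\<in>S. mult s t = one \<and> mult t s = one}"

lemma left_ideal1_eq: "a \<in> S \<Longrightarrow> left_ideal1 S mult a = (\<lambda>u. mult u a) ` S"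
  unfolding left_ideal1_def using one_closed left_one by force

lemma right_ideal1_eq: "a \<in> S \<Longrightarrow> right_ideal1 S mult a = (\<lambda>v. mult a v) ` S"
  unfolding right_ideal1_def using one_closed right_one by force

lemma two_ideal1_eq:
  assumes "a \<in> S"
  shows "two_ideal1 S mult a = {mult (mult u a) v | u v. u \<in> S \<and> v \<in> S}"
proof -
  have "two_ideal1 S mult a = (\<Union>w\<in>(\<lambda>u. mult u a) ` S. (\<lambda>v. mult w v) ` S)"
    unfolding two_ideal1_def left_ideal1_eq[OF assms, unfolded left_ideal1_def]
    using right_ideal1_eq[unfolded right_ideal1_def] mult_closed assms by auto
  then show ?thesis by blast
qed

lemma left_ideal1_subset_iff:
  assumes "a \<in> S" "b \<in> S"
  shows "left_ideal1 S mult a \<subseteq> left_ideal1 S mult b \<longleftrightarrow> (\<exists>u\<in>S. a = mult u b)"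
proof
  assume "left_ideal1 S mult a \<subseteq> left_ideal1 S mult b"
  then show "\<exists>u\<in>S. a = mult u b"
    using assms unfolding left_ideal1_eq[OF assms(2)] by (auto simp: left_ideal1_def)
next
  assume "\<exists>u\<in>S. a = mult u b"
  then obtain u where "u \<in> S" "a = mult u b" by blast
  then show "left_ideal1 S mult a \<subseteq> left_ideal1 S mult b"
    unfolding left_ideal1_eq[OF assms(1)] left_ideal1_eq[OF assms(2)]
    using assms by (auto simp: mult_assoc[symmetric] intro!: mult_closed)
qed

lemma right_ideal1_subset_iff:
  assumes "a \<in> S" "b \<in> S"
  shows "right_ideal1 S mult a \<subseteq> right_ideal1 S mult b \<longleftrightarrow> (\<exists>v\<in>S. a = mult b v)"
proof
  assume "right_ideal1 S mult a \<subseteq> right_ideal1 S mult b"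
  then show "\<exists>v\<in>S. a = mult b v"
    using assms unfolding right_ideal1_eq[OF assms(2)] by (auto simp: right_ideal1_def)
next
  assume "\<exists>v\<in>S. a = mult b v"
  then obtain v where "v \<in> S" "a = mult b v" by blast
  then show "right_ideal1 S mult a \<subseteq> right_ideal1 S mult b"
    unfolding right_ideal1_eq[OF assms(1)] right_ideal1_eq[OF assms(2)]
    using assms by (auto simp: mult_assoc intro!: mult_closed)
qed

lemma two_ideal1_subset_iff:
  assumes "a \<in> S" "b \<in> S"
  shows "two_ideal1 S mult a \<subseteq> two_ideal1 S mult b \<longleftrightarrow> (\<exists>u\<in>S. \<exists>v\<in>S. a = mult (mult u b) v)"
proof
  assume "two_ideal1 S mult a \<subseteq> two_ideal1 S mult b"
  moreover have "a \<in> two_ideal1 S mult a"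
    unfolding two_ideal1_eq[OF assms(1)] using assms one_closed left_one right_one by force
  ultimately show "\<exists>u\<in>S. \<exists>v\<in>S. a = mult (mult u b) v"
    unfolding two_ideal1_eq[OF assms(2)] by blast
next
  assume "\<exists>u\<in>S. \<exists>v\<in>S. a = mult (mult u b) v"
  then obtain u v where uv: "u \<in> S" "v \<in> S" "a = mult (mult u b) v" by blast
  have "mult (mult w a) z = mult (mult (mult w u) b) (mult v z)" if "w \<in> S" "z \<in> S" for w z
    using that uv assms by (simp add: mult_assoc mult_closed)
  then show "two_ideal1 S mult a \<subseteq> two_ideal1 S mult b"
    unfolding two_ideal1_eq[OF assms(1)] two_ideal1_eq[OF assms(2)]
    using uv by (blast intro: mult_closed)
qed

lemma greenL_iff:
  "a \<in> S \<Longrightarrow> b \<in> S \<Longrightarrow> greenL S mult a b \<longleftrightarrow> (\<exists>u\<in>S. a = mult u b) \<and> (\<exists>u\<in>S. b = mult u a)"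
  unfolding greenL_def by (simp add: set_eq_subset left_ideal1_subset_iff)

lemma greenR_iff:
  "a \<in> S \<Longrightarrow> b \<in> S \<Longrightarrow> greenR S mult a b \<longleftrightarrow> (\<exists>v\<in>S. a = mult b v) \<and> (\<exists>v\<in>S. b = mult a v)"
  unfolding greenR_def by (simp add: set_eq_subset right_ideal1_subset_iff)

lemma greenJ_iff:
  "a \<in> S \<Longrightarrow> b \<in> S \<Longrightarrow> greenJ S mult a b \<longleftrightarrow>
     (\<exists>u\<in>S. \<exists>v\<in>S. a = mult (mult u b) v) \<and> (\<exists>u\<in>S. \<exists>v\<in>S. b = mult (mult u a) v)"
  unfolding greenJ_def by (simp add: set_eq_subset two_ideal1_subset_iff)

lemma greenD_imp_greenJ:
  assumes "a \<in> S" "b \<in> S" "greenD S mult a b"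
  shows "greenJ S mult a b"
proof -
  obtain c where c: "c \<in> S" "greenL S mult a c" "greenR S mult c b"
    using assms(3) unfolding greenD_def by blast
  obtain u u' where u: "u \<in> S" "a = mult u c" and u': "u' \<in> S" "c = mult u' a"
    using c(2) greenL_iff[OF assms(1) c(1)] by blast
  obtain v v' where v: "v \<in> S" "c = mult b v" and v': "v' \<in> S" "b = mult c v'"
    using c(3) greenR_iff[OF c(1) assms(2)] by blast
  have "a = mult (mult u b) v" using mult_assoc[OF u(1) assms(2) v(1)] u(2) v(2) by simp
  moreover have "b = mult (mult u' a) v'" using u'(2) v'(2) by simp
  ultimately show ?thesis using assms u v u' v' greenJ_iff by blast
qed

lemma one_unit: "one \<in> units"
  unfolding units_def using one_closed left_one by auto

lemma unit_sandwich_greenD: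
  assumes "\<sigma> \<in> units" "\<tau> \<in> units" "b \<in> S"
  shows "greenD S mult (mult (mult \<sigma> b) \<tau>) b"
proof -
  obtain \<sigma>' \<tau>' where \<sigma>': "\<sigma> \<in> S" "\<sigma>' \<in> S" "mult \<sigma>' \<sigma> = one"
    and \<tau>': "\<tau> \<in> S" "\<tau>' \<in> S" "mult \<tau> \<tau>' = one"
    using assms(1,2) unfolding units_def by blast
  define c where "c = mult b \<tau>"
  have c: "c \<in> S" unfolding c_def using assms(3) \<tau>'(1) by (rule mult_closed)
  have "mult (mult \<sigma> b) \<tau> = mult \<sigma> c"
    unfolding c_def using \<sigma>'(1) assms(3) \<tau>'(1) by (rule mult_assoc)
  moreover have "c = mult \<sigma>' (mult \<sigma> c)"
    using \<sigma>' c mult_assoc[of \<sigma>' \<sigma> c] left_one by simp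
  then have "greenL S mult (mult \<sigma> c) c"
    using greenL_iff[of "mult \<sigma> c" c] \<sigma>' c mult_closed by blast
  moreover have "b = mult c \<tau>'"
    using assms(3) \<tau>' mult_assoc[of b \<tau> \<tau>'] right_one by (simp add: c_def)
  then have "greenR S mult c b"
    using greenR_iff[of c b] assms(3) \<tau>' c unfolding c_def by blast
  ultimately show ?thesis unfolding greenD_def using c by auto
qed

end

definition sqdist :: "nat ^ 'n \<Rightarrow> nat ^ 'n \<Rightarrow> int" where
  "sqdist x y = (\<Sum>i\<in>UNIV. (int (x $ i) - int (y $ i))\<^sup>2)"

lemma edist_eq_sqrt_sqdist: "edist x y = sqrt (sqdist x y)"
  unfolding edist_def sqdist_def by simp

lemma edist_eq_iff_sqdist: "edist x y = edist u v \<longleftrightarrow> sqdist x y = sqdist u v"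
  unfolding edist_eq_sqrt_sqdist by simp

lemma sqdist_single_coord:
  assumes "\<And>i. i \<noteq> j \<Longrightarrow> x $ i = y $ i"
  shows "sqdist x y = (int (x $ j) - int (y $ j))\<^sup>2"
proof -
  have "sqdist x y = (\<Sum>i\<in>UNIV. if i = j then (int (x $ j) - int (y $ j))\<^sup>2 else 0)"
    unfolding sqdist_def by (rule sum.cong) (auto simp: assms)
  then show ?thesis by simp
qed

lemma sqdist_two_coords:
  assumes "k \<noteq> l" "\<And>i. i \<noteq> k \<Longrightarrow> i \<noteq> l \<Longrightarrow> x $ i = y $ i"
  shows "sqdist x y = (int (x $ k) - int (y $ k))\<^sup>2 + (int (x $ l) - int (y $ l))\<^sup>2"
proof -
  have "sqdist x y = (\<Sum>i\<in>UNIV. (if i = k then (int (x $ k) - int (y $ k))\<^sup>2 else 0)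
       + (if i = l then (int (x $ l) - int (y $ l))\<^sup>2 else 0))"
    unfolding sqdist_def by (rule sum.cong) (use assms in auto)
  then show ?thesis by (simp add: sum.distrib)
qed

lemma sqdist_diff_single_coord:
  assumes "\<And>i. i \<noteq> j \<Longrightarrow> z' $ i = z $ i"
  shows "sqdist y z' - sqdist y z = (int (y $ j) - int (z' $ j))\<^sup>2 - (int (y $ j) - int (z $ j))\<^sup>2"
proof -
  have "sqdist y z' - sqdist y z
      = (\<Sum>i\<in>UNIV. (int (y $ i) - int (z' $ i))\<^sup>2 - (int (y $ i) - int (z $ i))\<^sup>2)"
    unfolding sqdist_def by (simp add: sum_subtractf)
  also have "\<dots> = (\<Sum>i\<in>UNIV. if i = j
      then (int (y $ j) - int (z' $ j))\<^sup>2 - (int (y $ j) - int (z $ j))\<^sup>2 else 0)"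
    by (rule sum.cong) (auto simp: assms)
  finally show ?thesis by simp
qed

lemma sqdist_eq_1:
  assumes "sqdist x y = 1"
  obtains j where "\<And>i. i \<noteq> j \<Longrightarrow> x $ i = y $ i" "(int (x $ j) - int (y $ j))\<^sup>2 = 1"
proof -
  let ?t = "\<lambda>i. (int (x $ i) - int (y $ i))\<^sup>2"
  obtain j where j: "x $ j \<noteq> y $ j"
    using assms unfolding sqdist_def by (metis (no_types, lifting) sum.neutral diff_self
        power_zero_numeral zero_neq_one)
  have split: "sqdist x y = ?t j + (\<Sum>i\<in>UNIV - {j}. ?t i)"
    unfolding sqdist_def by (simp add: sum.remove)
  have "?t j \<ge> 1" using j by (simp add: int_one_le_iff_zero_less)
  moreover have "(\<Sum>i\<in>UNIV - {j}. ?t i) \<ge> 0" by (simp add: sum_nonneg)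
  ultimately have "?t j = 1" "(\<Sum>i\<in>UNIV - {j}. ?t i) = 0"
    using split assms by linarith+
  then show ?thesis using that[of j] by (simp add: sum_nonneg_eq_0_iff)
qed

definition vec_perm :: "('n \<Rightarrow> 'n) \<Rightarrow> nat ^ 'n \<Rightarrow> nat ^ 'n" where
  "vec_perm q x = (\<chi> j. x $ q j)"

lemma vec_perm_nth [simp]: "vec_perm q x $ j = x $ q j"
  unfolding vec_perm_def by simp

lemma vec_perm_vec_perm: "vec_perm r (vec_perm q x) = vec_perm (q \<circ> r) x"
  by (simp add: vec_eq_iff)

lemma vec_perm_id: "vec_perm id x = x"
  by (simp add: vec_eq_iff)

lemma vec_perm_inv_left: "bij q \<Longrightarrow> vec_perm (inv q) (vec_perm q x) = x"
  by (simp add: vec_eq_iff bij_is_surj surj_f_inv_f)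

lemma vec_perm_inv_right: "bij q \<Longrightarrow> vec_perm q (vec_perm (inv q) x) = x"
  by (simp add: vec_eq_iff bij_is_inj)

lemma vec_perm_in_Npts: "x \<in> Npts \<Longrightarrow> vec_perm q x \<in> Npts"
  by (simp add: Npts_def)

lemma bij_betw_vec_perm:
  assumes "bij q" shows "bij_betw (vec_perm q) Npts Npts"
proof (rule bij_betw_byWitness[where f' = "vec_perm (inv q)"])
  show "vec_perm q ` Npts \<subseteq> Npts" "vec_perm (inv q) ` Npts \<subseteq> Npts"
    by (auto intro: vec_perm_in_Npts)
qed (simp_all add: vec_perm_inv_left vec_perm_inv_right assms)

lemma sqdist_vec_perm:
  assumes "bij q" shows "sqdist (vec_perm q x) (vec_perm q y) = sqdist x y"
  unfolding sqdist_def vec_perm_nth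
  using sum.reindex_bij_betw[of q UNIV UNIV "\<lambda>i. (int (x $ i) - int (y $ i))\<^sup>2"] assms
  by (simp add: bij_betw_def)

definition perm_map :: "(nat ^ 'n) set \<Rightarrow> ('n \<Rightarrow> 'n) \<Rightarrow> (nat ^ 'n \<rightharpoonup> nat ^ 'n)" where
  "perm_map A q = (\<lambda>x. if x \<in> A then Some (vec_perm q x) else None)"

lemma dom_perm_map [simp]: "dom (perm_map A q) = A"
  unfolding perm_map_def dom_def by auto

lemma ran_perm_map: "ran (perm_map A q) = vec_perm q ` A"
  unfolding perm_map_def ran_def by (auto split: if_splits)

lemma perm_map_rcomp: "perm_map A q \<cdot> perm_map B r = perm_map {x \<in> A. vec_perm q x \<in> B} (q \<circ> r)"
  unfolding rcomp_def perm_map_def map_comp_def by (simp add: vec_perm_vec_perm fun_eq_iff)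

lemma perm_map_mono: "A \<subseteq> B \<Longrightarrow> perm_map A q \<subseteq>\<^sub>m perm_map B q"
  unfolding map_le_def perm_map_def by auto

lemma Iden_eq_perm_map: "Iden = perm_map Npts id"
  unfolding Iden_def perm_map_def by (auto simp: fun_eq_iff vec_perm_id)

lemma perm_map_in_INinf:
  assumes "A \<subseteq> Npts" "finite (Npts - A)" "bij q"
  shows "perm_map A q \<in> INinf"
proof -
  have bq: "bij_betw (vec_perm q) Npts Npts" using assms(3) by (rule bij_betw_vec_perm)
  then have inj: "inj_on (vec_perm q) Npts" by (rule bij_betw_imp_inj_on)
  have "Npts - vec_perm q ` A = vec_perm q ` (Npts - A)"
    using inj_on_image_set_diff[OF inj _ assms(1)] bij_betw_imp_surj_on[OF bq] by simp
  then have "finite (Npts - ran (perm_map A q))"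
    using assms(2) by (simp add: ran_perm_map)
  moreover have "inj_on (perm_map A q) A"
    using inj assms(1) by (auto simp: inj_on_def perm_map_def)
  moreover have "ran (perm_map A q) \<subseteq> Npts"
    using assms(1) by (auto simp: ran_perm_map intro: vec_perm_in_Npts)
  moreover have "edist (the (perm_map A q x)) (the (perm_map A q y)) = edist x y"
    if "x \<in> A" "y \<in> A" for x y
    using that sqdist_vec_perm[OF assms(3)] by (simp add: perm_map_def edist_eq_iff_sqdist)
  ultimately show ?thesis
    using assms(1,2) by (simp add: INinf_def cofinite_pi_def partial_isometry_def)
qed

lemma INinfD:
  assumes "g \<in> INinf"
  shows "dom g \<subseteq> Npts" "ran g \<subseteq> Npts" "inj_on g (dom g)"
    "finite (Npts - dom g)" "finite (Npts - ran g)"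
    "\<And>x y. x \<in> dom g \<Longrightarrow> y \<in> dom g \<Longrightarrow> edist (the (g x)) (the (g y)) = edist x y"
  using assms unfolding INinf_def cofinite_pi_def partial_isometry_def by auto

lemma rcomp_Some_iff: "(a \<cdot> b) x = Some z \<longleftrightarrow> (\<exists>y. a x = Some y \<and> b y = Some z)"
  unfolding rcomp_def by (rule map_comp_Some_iff)

lemma partial_isometry_rcomp:
  assumes a: "partial_isometry a" and b: "partial_isometry b"
  shows "partial_isometry (a \<cdot> b)"
  unfolding partial_isometry_def
proof (intro conjI ballI)
  have iso_a: "inj_on a (dom a)" "\<And>x x'. x \<in> dom a \<Longrightarrow> x' \<in> dom a \<Longrightarrow>
      edist (the (a x)) (the (a x')) = edist x x'" and "dom a \<subseteq> Npts"
    using a unfolding partial_isometry_def by auto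
  have iso_b: "inj_on b (dom b)" "\<And>y y'. y \<in> dom b \<Longrightarrow> y' \<in> dom b \<Longrightarrow>
      edist (the (b y)) (the (b y')) = edist y y'" and "ran b \<subseteq> Npts"
    using b unfolding partial_isometry_def by auto
  show "dom (a \<cdot> b) \<subseteq> Npts" using \<open>dom a \<subseteq> Npts\<close> by (fastforce simp: rcomp_Some_iff)
  show "ran (a \<cdot> b) \<subseteq> Npts" using \<open>ran b \<subseteq> Npts\<close> by (auto simp: ran_def rcomp_Some_iff)
  show "inj_on (a \<cdot> b) (dom (a \<cdot> b))"
  proof (rule inj_onI)
    fix x x' assume "x \<in> dom (a \<cdot> b)" "x' \<in> dom (a \<cdot> b)" "(a \<cdot> b) x = (a \<cdot> b) x'"
    then obtain y y' z where "a x = Some y" "a x' = Some y'" "b y = Some z" "b y' = Some z"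
      by (auto simp: rcomp_Some_iff)
    then have "y = y'" using inj_onD[OF iso_b(1), of y y'] by (simp add: domI)
    then show "x = x'" using inj_onD[OF iso_a(1), of x x'] \<open>a x = Some y\<close> \<open>a x' = Some y'\<close>
      by (simp add: domI)
  qed
  fix x x' assume "x \<in> dom (a \<cdot> b)" "x' \<in> dom (a \<cdot> b)"
  then obtain y y' z z' where "a x = Some y" "a x' = Some y'" "b y = Some z" "b y' = Some z'"
    "(a \<cdot> b) x = Some z" "(a \<cdot> b) x' = Some z'"
    by (auto simp: rcomp_Some_iff)
  then show "edist (the ((a \<cdot> b) x)) (the ((a \<cdot> b) x')) = edist x x'"
    using iso_a(2)[of x x'] iso_b(2)[of y y'] by (simp add: domI)
qed

lemma finite_Npts_diff_dom_rcomp: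
  assumes "a \<in> INinf" "b \<in> INinf" shows "finite (Npts - dom (a \<cdot> b))"
proof -
  let ?f = "\<lambda>x. the (a x)"
  let ?C = "{x \<in> dom a. ?f x \<in> Npts - dom b}"
  have "inj_on ?f (dom a)"
  proof (rule inj_onI)
    fix x x' assume "x \<in> dom a" "x' \<in> dom a" "?f x = ?f x'"
    then have "a x = a x'" by (metis domIff option.expand)
    then show "x = x'" using inj_onD[OF INinfD(3)[OF assms(1)]] \<open>x \<in> dom a\<close> \<open>x' \<in> dom a\<close> by blast
  qed
  then have "inj_on ?f ?C" by (rule inj_on_subset) blast
  moreover have "finite (?f ` ?C)"
    by (rule finite_subset[OF _ INinfD(4)[OF assms(2)]]) blast
  ultimately have "finite ?C" by (rule finite_imageD[rotated])
  moreover have "Npts - dom (a \<cdot> b) \<subseteq> (Npts - dom a) \<union> ?C"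
    using INinfD(2)[OF assms(1)] by (auto simp: rcomp_Some_iff ran_def)
  ultimately show ?thesis
    by (rule finite_subset[OF _ finite_UnI[OF INinfD(4)[OF assms(1)]], rotated])
qed

lemma finite_Npts_diff_ran_rcomp:
  assumes "a \<in> INinf" "b \<in> INinf" shows "finite (Npts - ran (a \<cdot> b))"
proof -
  have "Npts - ran (a \<cdot> b) \<subseteq> (Npts - ran b) \<union> (\<lambda>y. the (b y)) ` (Npts - ran a)"
  proof
    fix z assume z: "z \<in> Npts - ran (a \<cdot> b)"
    show "z \<in> (Npts - ran b) \<union> (\<lambda>y. the (b y)) ` (Npts - ran a)"
    proof (cases "z \<in> ran b")
      case True
      then obtain y where y: "b y = Some z" by (auto simp: ran_def)
      have "y \<notin> ran a"
      proof
        assume "y \<in> ran a"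
        then obtain x where "a x = Some y" by (auto simp: ran_def)
        then have "(a \<cdot> b) x = Some z" using y by (auto simp: rcomp_Some_iff)
        with z show False by (auto simp: ran_def)
      qed
      moreover have "y \<in> Npts" using y INinfD(1)[OF assms(2)] by blast
      ultimately show ?thesis using y by force
    qed (use z in blast)
  qed
  then show ?thesis
    by (rule finite_subset) (simp add: INinfD(5)[OF assms(1)] INinfD(5)[OF assms(2)])
qed

lemma rcomp_in_INinf:
  assumes "a \<in> INinf" "b \<in> INinf" shows "a \<cdot> b \<in> INinf"
  using assms partial_isometry_rcomp[of a b]
    finite_Npts_diff_dom_rcomp[OF assms] finite_Npts_diff_ran_rcomp[OF assms]
  by (simp add: INinf_def cofinite_pi_def)

lemma rcomp_assoc: "(a \<cdot> b) \<cdot> c = a \<cdot> (b \<cdot> c)"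
  unfolding rcomp_def by (simp add: map_comp_def fun_eq_iff split: option.splits)

lemma rcomp_map_le_mono:
  assumes "a \<subseteq>\<^sub>m a'" "b \<subseteq>\<^sub>m b'" shows "a \<cdot> b \<subseteq>\<^sub>m a' \<cdot> b'"
proof (rule map_le_def[THEN iffD2], rule ballI)
  fix x assume "x \<in> dom (a \<cdot> b)"
  then obtain y z where "a x = Some y" "b y = Some z" by (auto simp: rcomp_Some_iff)
  moreover from this have "a' x = Some y" "b' y = Some z"
    using assms by (metis domI map_le_def)+
  ultimately show "(a \<cdot> b) x = (a' \<cdot> b') x" by (simp add: rcomp_def)
qed

lemma Iden_in_INinf: "Iden \<in> INinf"
  unfolding Iden_eq_perm_map by (rule perm_map_in_INinf) auto

lemma Iden_rcomp:
  assumes "a \<in> INinf" shows "Iden \<cdot> a = a"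
proof
  fix x
  have "x \<notin> Npts \<Longrightarrow> a x = None" using INinfD(1)[OF assms] by blast
  then show "(Iden \<cdot> a) x = a x" by (auto simp: rcomp_def Iden_def map_comp_def)
qed

lemma rcomp_Iden: "a \<in> INinf \<Longrightarrow> a \<cdot> Iden = a"
  using INinfD(2)[of a]
  by (auto simp: fun_eq_iff rcomp_def Iden_def map_comp_def ran_def split: option.splits)

interpretation IN: monoid_on INinf "(\<cdot>)" Iden
  by unfold_locales (simp_all add: rcomp_in_INinf rcomp_assoc Iden_in_INinf Iden_rcomp rcomp_Iden)

lemma units_IN_eq: "units_IN = IN.units"
  unfolding units_IN_def IN.units_def ..

lemma cofinite_contains_far_points:
  fixes A :: "(nat ^ 'n) set"
  assumes "finite (Npts - A)"
  obtains M where "1 \<le> M" "\<And>x i. x \<in> Npts \<Longrightarrow> M \<le> x $ i \<Longrightarrow> x \<in> A"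
proof -
  have "finite ((\<lambda>(x, i). x $ i) ` ((Npts - A) \<times> (UNIV :: 'n set)))"
    using assms by simp
  then obtain B where "\<forall>v \<in> (\<lambda>(x, i). x $ i) ` ((Npts - A) \<times> (UNIV :: 'n set)). v \<le> B"
    using finite_nat_set_iff_bounded_le by blast
  then have bound: "x $ i \<le> B" if "x \<in> Npts - A" for x i
    using that by force
  have "x \<in> A" if "x \<in> Npts" "Suc B \<le> x $ i" for x i
    using that bound[of x i] by (meson DiffI not_less_eq_eq)
  with that[of "Suc B"] show ?thesis by simp
qed

lemma isometry_signed_permutation:
  fixes f :: "nat ^ 'n \<Rightarrow> nat ^ 'n"
  assumes iso: "\<And>x y. x \<in> A \<Longrightarrow> y \<in> A \<Longrightarrow> sqdist (f x) (f y) = sqdist x y"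
    and a: "a \<in> A" "\<And>k. a + axis k 1 \<in> A"
  obtains \<pi> s where "bij \<pi>" "\<And>k. s k = 1 \<or> s k = -1"
    "\<And>x k. x \<in> A \<Longrightarrow> int (f x $ \<pi> k) = int (f a $ \<pi> k) + s k * (int (x $ k) - int (a $ k))"
proof -
  define e where "e k = a + axis k 1" for k
  have e_nth: "e k $ i = (if i = k then a $ i + 1 else a $ i)" for k i
    unfolding e_def axis_def by simp
  have e: "e k \<in> A" for k unfolding e_def by (rule a(2))
  have "\<exists>j. (\<forall>i. i \<noteq> j \<longrightarrow> f (e k) $ i = f a $ i) \<and> (int (f (e k) $ j) - int (f a $ j))\<^sup>2 = 1"
    for k
  proof -
    have "sqdist (e k) a = 1" by (subst sqdist_single_coord[of k]) (auto simp: e_nth)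
    then have "sqdist (f (e k)) (f a) = 1" using iso[OF e a(1)] by simp
    then show ?thesis by (rule sqdist_eq_1) blast
  qed
  then obtain \<pi> where \<pi>: "\<And>k i. i \<noteq> \<pi> k \<Longrightarrow> f (e k) $ i = f a $ i"
    "\<And>k. (int (f (e k) $ \<pi> k) - int (f a $ \<pi> k))\<^sup>2 = 1"
    by metis
  define s where "s k = int (f (e k) $ \<pi> k) - int (f a $ \<pi> k)" for k
  have s: "s k = 1 \<or> s k = -1" for k
    using \<pi>(2)[of k] by (simp add: s_def power2_eq_1_iff)
  have "inj \<pi>"
  proof (rule injI, rule ccontr)
    fix k l assume eq: "\<pi> k = \<pi> l" and kl: "k \<noteq> l"
    have "sqdist (e k) (e l) = 2"
      by (subst sqdist_two_coords[OF kl]) (use kl in \<open>auto simp: e_nth\<close>)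
    moreover have "sqdist (f (e k)) (f (e l)) = (s k - s l)\<^sup>2"
      by (subst sqdist_single_coord[of "\<pi> k"]) (use \<pi>(1) eq in \<open>auto simp: s_def\<close>)
    ultimately have "(s k - s l)\<^sup>2 = 2" using iso[OF e e] by simp
    then show False using s[of k] s[of l] by auto
  qed
  then have "bij \<pi>" using finite_UNIV_inj_surj[of \<pi>] by (simp add: bij_def)
  moreover have "int (f x $ \<pi> k) = int (f a $ \<pi> k) + s k * (int (x $ k) - int (a $ k))"
    if x: "x \<in> A" for x k
  proof -
    \<comment> \<open>the distances from \<open>x\<close> to \<open>a\<close> and to \<open>e k\<close> differ only through the \<open>k\<close>-th coordinate\<close>
    have "sqdist (f x) (f (e k)) - sqdist (f x) (f a) = sqdist x (e k) - sqdist x a"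
      using iso[OF x e] iso[OF x a(1)] by simp
    moreover have "sqdist (f x) (f (e k)) - sqdist (f x) (f a)
        = (int (f x $ \<pi> k) - int (f (e k) $ \<pi> k))\<^sup>2 - (int (f x $ \<pi> k) - int (f a $ \<pi> k))\<^sup>2"
      by (rule sqdist_diff_single_coord) (use \<pi>(1) in auto)
    moreover have "sqdist x (e k) - sqdist x a
        = (int (x $ k) - int (a $ k) - 1)\<^sup>2 - (int (x $ k) - int (a $ k))\<^sup>2"
      by (subst sqdist_diff_single_coord[of k]) (auto simp: e_nth algebra_simps)
    moreover have "int (f (e k) $ \<pi> k) = int (f a $ \<pi> k) + s k" by (simp add: s_def)
    ultimately show ?thesis using s[of k] by (auto simp: power2_eq_square algebra_simps)
  qed
  ultimately show ?thesis using that s by blast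
qed

lemma exists_other_index:
  assumes "CARD('n) \<ge> 2" obtains l :: 'n where "l \<noteq> k"
proof -
  have "(UNIV :: 'n set) \<noteq> {k}"
  proof
    assume "(UNIV :: 'n set) = {k}"
    then have "CARD('n) = card {k}" by (rule arg_cong)
    with assms show False by simp
  qed
  then show ?thesis using that by blast
qed

lemma affine_coordinate_is_identity:
  fixes f :: "nat ^ 'n \<Rightarrow> nat ^ 'n"
  assumes n2: "CARD('n) \<ge> 2" and M: "1 \<le> M"
    and far: "\<And>x i. x \<in> Npts \<Longrightarrow> M \<le> x $ i \<Longrightarrow> x \<in> A \<and> x \<in> f ` A"
    and A: "A \<subseteq> Npts" "f ` A \<subseteq> Npts"
    and s: "s = 1 \<or> s = -1"
    and affine: "\<And>x. x \<in> A \<Longrightarrow> int (f x $ j) = int c + s * (int (x $ k) - int M)"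
  shows "s = 1" "c = M"
proof -
  have pos: "1 \<le> y $ i" if "y \<in> Npts" for y :: "nat ^ 'n" and i
    using that by (simp add: Npts_def)
  \<comment> \<open>test points with one free coordinate; \<open>n \<ge> 2\<close> leaves another one at \<open>M\<close>, so they are far\<close>
  define pt :: "'n \<Rightarrow> nat \<Rightarrow> nat ^ 'n" where "pt i0 v = (\<chi> i. if i = i0 then v else M)" for i0 v
  have pt_far: "pt i0 v \<in> A \<and> pt i0 v \<in> f ` A" if "1 \<le> v" for i0 v
  proof -
    obtain l where "l \<noteq> i0" using exists_other_index[OF n2] by blast
    moreover have "pt i0 v \<in> Npts" using that M by (simp add: pt_def Npts_def)
    ultimately show ?thesis using far[of "pt i0 v" l] by (simp add: pt_def)
  qed
  have fA: "1 \<le> f x $ j" if "x \<in> A" for x using A(2) that pos by blast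
  show "s = 1"
  proof (rule ccontr)
    assume "s \<noteq> 1"
    then have "s = -1" using s by simp
    moreover have "pt k (M + c) \<in> A" using pt_far M by simp
    ultimately have "int (f (pt k (M + c)) $ j) = 0" using affine by (simp add: pt_def)
    with fA[OF \<open>pt k (M + c) \<in> A\<close>] show False by simp
  qed
  have "int (f (pt k 1) $ j) = int c + 1 - int M"
    using affine[of "pt k 1"] pt_far \<open>s = 1\<close> by (simp add: pt_def)
  then have "M \<le> c" using fA[of "pt k 1"] pt_far by fastforce
  moreover obtain z where z: "z \<in> A" "f z = pt j 1" using pt_far[of 1 j] by auto
  then have "1 = int c + int (z $ k) - int M"
    using affine[OF z(1)] \<open>s = 1\<close> by (simp add: pt_def)
  then have "c \<le> M" using pos[of z k] A(1) z(1) by fastforce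
  ultimately show "c = M" by simp
qed

lemma INinf_eq_perm_map:
  fixes \<alpha> :: "nat ^ 'n \<rightharpoonup> nat ^ 'n"
  assumes n2: "CARD('n) \<ge> 2" and \<alpha>: "\<alpha> \<in> INinf"
  obtains q where "bij q" "\<alpha> = perm_map (dom \<alpha>) q"
proof -
  note A = INinfD[OF \<alpha>]
  define f where "f x = the (\<alpha> x)" for x
  have \<alpha>f: "\<alpha> x = Some (f x)" if "x \<in> dom \<alpha>" for x using that by (auto simp: f_def)
  have ran_f: "ran \<alpha> = f ` dom \<alpha>"
    unfolding ran_def f_def by force
  obtain M where M: "1 \<le> M" and far: "\<And>x i. x \<in> Npts \<Longrightarrow> M \<le> x $ i \<Longrightarrow> x \<in> dom \<alpha> \<inter> ran \<alpha>"
    using cofinite_contains_far_points[of "dom \<alpha> \<inter> ran \<alpha>"] A(4,5)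
    by (metis Diff_Int finite_UnI)
  define a :: "nat ^ 'n" where "a = (\<chi> i. M)"
  have a: "a \<in> dom \<alpha>" "a + axis k 1 \<in> dom \<alpha>" for k
    using far[of a] far[of "a + axis k 1" k] M by (auto simp: a_def Npts_def axis_def)
  have iso: "sqdist (f x) (f y) = sqdist x y" if "x \<in> dom \<alpha>" "y \<in> dom \<alpha>" for x y
    using A(6)[OF that] by (simp add: f_def edist_eq_iff_sqdist)
  obtain \<pi> s where \<pi>: "bij \<pi>" and s: "\<And>k. s k = 1 \<or> s k = -1"
    and affine: "\<And>x k. x \<in> dom \<alpha> \<Longrightarrow>
      int (f x $ \<pi> k) = int (f a $ \<pi> k) + s k * (int (x $ k) - int M)"
    using isometry_signed_permutation[of "dom \<alpha>" f a, OF iso a] by (auto simp: a_def)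
  have "s k = 1 \<and> f a $ \<pi> k = M" for k
    using affine_coordinate_is_identity[OF n2 M _ A(1) _ s affine[of _ k]] far A(2)
    unfolding ran_f by blast
  then have f_coord: "f x $ \<pi> k = x $ k" if "x \<in> dom \<alpha>" for x k
    using affine[OF that, of k] by simp
  have "\<alpha> = perm_map (dom \<alpha>) (inv \<pi>)"
  proof
    fix x show "\<alpha> x = perm_map (dom \<alpha>) (inv \<pi>) x"
    proof (cases "x \<in> dom \<alpha>")
      case True
      have "f x = vec_perm (inv \<pi>) x"
        using f_coord[OF True] \<pi> by (simp add: vec_eq_iff) (metis bij_inv_eq_iff)
      then show ?thesis using True \<alpha>f by (simp add: perm_map_def)
    qed (simp add: perm_map_def domIff)
  qed
  then show ?thesis using that bij_imp_bij_inv[OF \<pi>] by blast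
qed

lemma perm_map_unit:
  fixes q :: "'n::finite \<Rightarrow> 'n"
  assumes "bij q" shows "perm_map Npts q \<in> units_IN"
proof -
  have inv: "perm_map Npts p \<cdot> perm_map Npts (inv p) = Iden" if "bij p" for p :: "'n \<Rightarrow> 'n"
    unfolding perm_map_rcomp
    by (auto simp: perm_map_def Iden_def fun_eq_iff vec_perm_in_Npts that
        simp flip: vec_perm_vec_perm intro: vec_perm_inv_left)
  have "perm_map Npts (inv (inv q)) = perm_map Npts q"
    using assms by (simp add: inv_inv_eq bij_is_inj bij_is_surj)
  then show ?thesis
    unfolding units_IN_def
    using inv[OF assms] inv[OF bij_imp_bij_inv[OF assms]] assms
    by (auto intro!: perm_map_in_INinf bij_imp_bij_inv)
qed

lemma unit_in_INinf: "\<sigma> \<in> units_IN \<Longrightarrow> \<sigma> \<in> INinf"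
  unfolding units_IN_def by blast

lemma dom_unit: "\<sigma> \<in> units_IN \<Longrightarrow> dom \<sigma> = Npts"
proof -
  assume "\<sigma> \<in> units_IN"
  then obtain \<tau> where "\<sigma> \<in> INinf" "\<sigma> \<cdot> \<tau> = Iden" unfolding units_IN_def by blast
  moreover have "dom Iden = Npts" by (auto simp: Iden_def dom_def)
  moreover have "dom (\<sigma> \<cdot> \<tau>) \<subseteq> dom \<sigma>" by (auto simp: rcomp_def map_comp_def split: option.splits)
  ultimately show "dom \<sigma> = Npts" using INinfD(1)[of \<sigma>] by (metis subset_antisym)
qed

lemma units_IN_iff_perm_map:
  assumes n2: "CARD('n) \<ge> 2"
  shows "(\<sigma> :: nat ^ 'n \<rightharpoonup> nat ^ 'n) \<in> units_IN \<longleftrightarrow> (\<exists>q. bij q \<and> \<sigma> = perm_map Npts q)"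
proof
  assume \<sigma>: "\<sigma> \<in> units_IN"
  then obtain q where "bij q" "\<sigma> = perm_map (dom \<sigma>) q"
    using INinf_eq_perm_map[OF n2] unfolding units_IN_def by blast
  then show "\<exists>q. bij q \<and> \<sigma> = perm_map Npts q" using dom_unit[OF \<sigma>] by auto
qed (auto intro: perm_map_unit)

lemma finite_units_IN:
  assumes "CARD('n) \<ge> 2" shows "finite (units_IN :: (nat ^ 'n \<rightharpoonup> nat ^ 'n) set)"
proof (rule finite_subset)
  show "(units_IN :: (nat ^ 'n \<rightharpoonup> nat ^ 'n) set) \<subseteq> range (perm_map Npts)"
    using units_IN_iff_perm_map[OF assms] by blast
qed simp

lemma INinf_le_unit:
  assumes "CARD('n) \<ge> 2" and "(\<alpha> :: nat ^ 'n \<rightharpoonup> nat ^ 'n) \<in> INinf"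
  obtains \<sigma> where "\<sigma> \<in> units_IN" "\<alpha> \<subseteq>\<^sub>m \<sigma>"
proof -
  obtain q where "bij q" "\<alpha> = perm_map (dom \<alpha>) q" using INinf_eq_perm_map assms by blast
  then show ?thesis
    using that perm_map_unit perm_map_mono[OF INinfD(1)[OF assms(2)]] by metis
qed

definition defect :: "(nat ^ 'n \<rightharpoonup> nat ^ 'n) \<Rightarrow> nat" where
  "defect g = card (Npts - dom g)"

lemma defect_antimono:
  assumes "f \<in> INinf" "f \<subseteq>\<^sub>m g" shows "defect g \<le> defect f"
  unfolding defect_def
  using map_le_implies_dom_le[OF assms(2)] INinfD(4)[OF assms(1)] by (auto intro!: card_mono)

lemma map_le_eq_if_defect_le:
  assumes f: "f \<in> INinf" and g: "g \<in> INinf" and le: "f \<subseteq>\<^sub>m g" and "defect f \<le> defect g"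
  shows "f = g"
proof -
  have sub: "Npts - dom g \<subseteq> Npts - dom f" using map_le_implies_dom_le[OF le] by blast
  moreover have "card (Npts - dom g) = card (Npts - dom f)"
    using card_mono[OF INinfD(4)[OF f] sub] assms(4) unfolding defect_def by simp
  ultimately have "Npts - dom g = Npts - dom f"
    using INinfD(4)[OF f] by (simp add: card_subset_eq)
  then have "dom f = dom g" using INinfD(1)[OF f] INinfD(1)[OF g] map_le_implies_dom_le[OF le] by blast
  then show ?thesis using le by (simp add: map_le_antisym map_le_def)
qed

lemma defect_rcomp_unit:
  assumes "g \<in> INinf" "\<sigma> \<in> units_IN" shows "defect (g \<cdot> \<sigma>) = defect g"
proof -
  have "dom (g \<cdot> \<sigma>) = dom g"
  proof (intro set_eqI iffI)
    fix x assume "x \<in> dom g"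
    then obtain y where y: "g x = Some y" by blast
    then have "y \<in> dom \<sigma>" using INinfD(2)[OF assms(1)] dom_unit[OF assms(2)] by (auto simp: ran_def)
    then show "x \<in> dom (g \<cdot> \<sigma>)" using y by (auto simp: rcomp_Some_iff)
  qed (auto simp: rcomp_Some_iff)
  then show ?thesis by (simp add: defect_def)
qed

lemma defect_unit_rcomp:
  assumes n2: "CARD('n) \<ge> 2" and "(g :: nat ^ 'n \<rightharpoonup> nat ^ 'n) \<in> INinf" "\<sigma> \<in> units_IN"
  shows "defect (\<sigma> \<cdot> g) = defect g"
proof -
  obtain p where p: "bij p" "\<sigma> = perm_map Npts p" using assms(3) units_IN_iff_perm_map[OF n2] by blast
  have bp: "bij_betw (vec_perm p) Npts Npts" using p(1) by (rule bij_betw_vec_perm)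
  have dom: "dom (\<sigma> \<cdot> g) = {x \<in> Npts. vec_perm p x \<in> dom g}"
    by (auto simp: p(2) rcomp_def perm_map_def dom_def map_comp_def)
  have "vec_perm p ` {x \<in> Npts. vec_perm p x \<in> Npts - dom g} = Npts - dom g"
  proof (intro equalityI subsetI)
    fix y assume y: "y \<in> Npts - dom g"
    then have "vec_perm (inv p) y \<in> {x \<in> Npts. vec_perm p x \<in> Npts - dom g}"
      using vec_perm_in_Npts vec_perm_inv_right[OF p(1)] by auto
    then show "y \<in> vec_perm p ` {x \<in> Npts. vec_perm p x \<in> Npts - dom g}"
      by (rule image_eqI[where f = "vec_perm p", OF vec_perm_inv_right[OF p(1), of y, symmetric]])
  qed auto
  then have "bij_betw (vec_perm p) {x \<in> Npts. vec_perm p x \<in> Npts - dom g} (Npts - dom g)"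
    by (rule bij_betw_subset[OF bp, rotated]) blast
  moreover have "Npts - dom (\<sigma> \<cdot> g) = {x \<in> Npts. vec_perm p x \<in> Npts - dom g}"
    unfolding dom using vec_perm_in_Npts by blast
  ultimately show ?thesis unfolding defect_def by (simp add: bij_betw_same_card)
qed

lemma defect_unit_sandwich:
  assumes n2: "CARD('n) \<ge> 2" and "(\<beta> :: nat ^ 'n \<rightharpoonup> nat ^ 'n) \<in> INinf" "\<sigma> \<in> units_IN" "\<tau> \<in> units_IN"
  shows "defect (\<sigma> \<cdot> \<beta> \<cdot> \<tau>) = defect \<beta>"
proof -
  have "\<sigma> \<cdot> \<beta> \<in> INinf" using assms(2,3) by (simp add: rcomp_in_INinf unit_in_INinf)
  then show ?thesis using assms by (simp add: defect_rcomp_unit defect_unit_rcomp)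
qed

lemma defect_le_sandwich:
  assumes n2: "CARD('n) \<ge> 2"
    and "(\<beta> :: nat ^ 'n \<rightharpoonup> nat ^ 'n) \<in> INinf" "u \<in> INinf" "v \<in> INinf"
  shows "defect \<beta> \<le> defect (u \<cdot> \<beta> \<cdot> v)"
proof -
  obtain \<sigma> \<tau> where "\<sigma> \<in> units_IN" "u \<subseteq>\<^sub>m \<sigma>" "\<tau> \<in> units_IN" "v \<subseteq>\<^sub>m \<tau>"
    using INinf_le_unit[OF n2] assms(3,4) by metis
  then have "defect (\<sigma> \<cdot> \<beta> \<cdot> \<tau>) \<le> defect (u \<cdot> \<beta> \<cdot> v)"
    using assms by (intro defect_antimono rcomp_in_INinf rcomp_map_le_mono map_le_refl)
  then show ?thesis using defect_unit_sandwich[OF n2 assms(2)] \<open>\<sigma> \<in> units_IN\<close> \<open>\<tau> \<in> units_IN\<close> by simp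
qed

lemma mutual_sandwich_eq_unit_sandwich:
  assumes n2: "CARD('n) \<ge> 2" and \<beta>: "(\<beta> :: nat ^ 'n \<rightharpoonup> nat ^ 'n) \<in> INinf"
    and uv: "u \<in> INinf" "v \<in> INinf" "u' \<in> INinf" "v' \<in> INinf"
    and \<alpha>: "\<alpha> = u \<cdot> \<beta> \<cdot> v" and \<beta>\<alpha>: "\<beta> = u' \<cdot> \<alpha> \<cdot> v'"
    and \<sigma>\<tau>: "\<sigma> \<in> units_IN" "\<tau> \<in> units_IN" "u \<subseteq>\<^sub>m \<sigma>" "v \<subseteq>\<^sub>m \<tau>"
  shows "\<alpha> = \<sigma> \<cdot> \<beta> \<cdot> \<tau>"
proof (rule map_le_eq_if_defect_le)
  show \<alpha>_in: "\<alpha> \<in> INinf" unfolding \<alpha> using \<beta> uv by (simp add: rcomp_in_INinf)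
  show "\<sigma> \<cdot> \<beta> \<cdot> \<tau> \<in> INinf" using \<beta> \<sigma>\<tau> by (simp add: rcomp_in_INinf unit_in_INinf)
  show "\<alpha> \<subseteq>\<^sub>m \<sigma> \<cdot> \<beta> \<cdot> \<tau>" unfolding \<alpha> using \<sigma>\<tau> by (simp add: rcomp_map_le_mono)
  have "defect \<alpha> \<le> defect \<beta>" using defect_le_sandwich[OF n2 \<alpha>_in uv(3,4)] \<beta>\<alpha> by simp
  then show "defect \<alpha> \<le> defect (\<sigma> \<cdot> \<beta> \<cdot> \<tau>)" using defect_unit_sandwich[OF n2 \<beta> \<sigma>\<tau>(1,2)] by simp
qed

lemma greenL_iff_unit:
  assumes n2: "CARD('n) \<ge> 2" and \<alpha>: "(\<alpha> :: nat ^ 'n \<rightharpoonup> nat ^ 'n) \<in> INinf" and \<beta>: "\<beta> \<in> INinf"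
  shows "greenL INinf (\<cdot>) \<alpha> \<beta> \<longleftrightarrow> (\<exists>\<sigma>\<in>units_IN. \<alpha> = \<sigma> \<cdot> \<beta>)"
proof
  assume "greenL INinf (\<cdot>) \<alpha> \<beta>"
  then obtain u u' where u: "u \<in> INinf" "\<alpha> = u \<cdot> \<beta> \<cdot> Iden" and u': "u' \<in> INinf" "\<beta> = u' \<cdot> \<alpha> \<cdot> Iden"
    using IN.greenL_iff[OF \<alpha> \<beta>] \<alpha> \<beta> by (auto simp: rcomp_Iden)
  obtain \<sigma> where \<sigma>: "\<sigma> \<in> units_IN" "u \<subseteq>\<^sub>m \<sigma>" using INinf_le_unit[OF n2 u(1)] by blast
  have "\<alpha> = \<sigma> \<cdot> \<beta> \<cdot> Iden"
    using mutual_sandwich_eq_unit_sandwich[OF n2 \<beta> u(1) Iden_in_INinf u'(1) Iden_in_INinf u(2) u'(2)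
        \<sigma>(1) _ \<sigma>(2) map_le_refl] IN.one_unit by (simp add: units_IN_eq)
  then show "\<exists>\<sigma>\<in>units_IN. \<alpha> = \<sigma> \<cdot> \<beta>"
    using \<sigma>(1) \<beta> by (metis rcomp_Iden rcomp_in_INinf unit_in_INinf)
next
  assume "\<exists>\<sigma>\<in>units_IN. \<alpha> = \<sigma> \<cdot> \<beta>"
  then obtain \<sigma> \<tau> where "\<alpha> = \<sigma> \<cdot> \<beta>" "\<tau> \<in> INinf" "\<tau> \<cdot> \<sigma> = Iden" "\<sigma> \<in> INinf"
    unfolding units_IN_def by blast
  then have "\<beta> = \<tau> \<cdot> \<alpha>" using \<beta> by (simp flip: rcomp_assoc add: Iden_rcomp)
  then show "greenL INinf (\<cdot>) \<alpha> \<beta>"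
    using IN.greenL_iff[OF \<alpha> \<beta>] \<open>\<alpha> = \<sigma> \<cdot> \<beta>\<close> \<open>\<tau> \<in> INinf\<close> \<open>\<sigma> \<in> INinf\<close> by blast
qed

lemma greenR_iff_unit:
  assumes n2: "CARD('n) \<ge> 2" and \<alpha>: "(\<alpha> :: nat ^ 'n \<rightharpoonup> nat ^ 'n) \<in> INinf" and \<beta>: "\<beta> \<in> INinf"
  shows "greenR INinf (\<cdot>) \<alpha> \<beta> \<longleftrightarrow> (\<exists>\<sigma>\<in>units_IN. \<alpha> = \<beta> \<cdot> \<sigma>)"
proof
  assume "greenR INinf (\<cdot>) \<alpha> \<beta>"
  then obtain v v' where v: "v \<in> INinf" "\<alpha> = Iden \<cdot> \<beta> \<cdot> v" and v': "v' \<in> INinf" "\<beta> = Iden \<cdot> \<alpha> \<cdot> v'"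
    using IN.greenR_iff[OF \<alpha> \<beta>] \<alpha> \<beta> by (auto simp: Iden_rcomp)
  obtain \<tau> where \<tau>: "\<tau> \<in> units_IN" "v \<subseteq>\<^sub>m \<tau>" using INinf_le_unit[OF n2 v(1)] by blast
  have "\<alpha> = Iden \<cdot> \<beta> \<cdot> \<tau>"
    using mutual_sandwich_eq_unit_sandwich[OF n2 \<beta> Iden_in_INinf v(1) Iden_in_INinf v'(1) v(2) v'(2)
        _ \<tau>(1) map_le_refl \<tau>(2)] IN.one_unit by (simp add: units_IN_eq)
  then show "\<exists>\<sigma>\<in>units_IN. \<alpha> = \<beta> \<cdot> \<sigma>" using \<tau>(1) \<beta> by (metis Iden_rcomp)
next
  assume "\<exists>\<sigma>\<in>units_IN. \<alpha> = \<beta> \<cdot> \<sigma>"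
  then obtain \<sigma> \<tau> where "\<alpha> = \<beta> \<cdot> \<sigma>" "\<tau> \<in> INinf" "\<sigma> \<cdot> \<tau> = Iden" "\<sigma> \<in> INinf"
    unfolding units_IN_def by blast
  then have "\<beta> = \<alpha> \<cdot> \<tau>" using \<beta> by (simp add: rcomp_assoc rcomp_Iden)
  then show "greenR INinf (\<cdot>) \<alpha> \<beta>"
    using IN.greenR_iff[OF \<alpha> \<beta>] \<open>\<alpha> = \<beta> \<cdot> \<sigma>\<close> \<open>\<tau> \<in> INinf\<close> \<open>\<sigma> \<in> INinf\<close> by blast
qed

lemma greenJ_imp_unit_sandwich:
  assumes n2: "CARD('n) \<ge> 2" and \<alpha>: "(\<alpha> :: nat ^ 'n \<rightharpoonup> nat ^ 'n) \<in> INinf" and \<beta>: "\<beta> \<in> INinf"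
    and "greenJ INinf (\<cdot>) \<alpha> \<beta>"
  obtains \<sigma> \<tau> where "\<sigma> \<in> units_IN" "\<tau> \<in> units_IN" "\<alpha> = \<sigma> \<cdot> \<beta> \<cdot> \<tau>"
proof -
  obtain u v u' v' where uv: "u \<in> INinf" "v \<in> INinf" "\<alpha> = u \<cdot> \<beta> \<cdot> v"
    and uv': "u' \<in> INinf" "v' \<in> INinf" "\<beta> = u' \<cdot> \<alpha> \<cdot> v'"
    using IN.greenJ_iff[OF \<alpha> \<beta>] assms(4) by blast
  obtain \<sigma> \<tau> where "\<sigma> \<in> units_IN" "u \<subseteq>\<^sub>m \<sigma>" "\<tau> \<in> units_IN" "v \<subseteq>\<^sub>m \<tau>"
    using INinf_le_unit[OF n2] uv(1,2) by metis
  then show ?thesis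
    using that mutual_sandwich_eq_unit_sandwich[OF n2 \<beta> uv(1,2) uv'(1,2) uv(3) uv'(3)] by blast
qed

lemma greenD_iff_unit_sandwich:
  assumes n2: "CARD('n) \<ge> 2" and \<alpha>: "(\<alpha> :: nat ^ 'n \<rightharpoonup> nat ^ 'n) \<in> INinf" and \<beta>: "\<beta> \<in> INinf"
  shows "greenD INinf (\<cdot>) \<alpha> \<beta> \<longleftrightarrow> (\<exists>\<sigma>\<in>units_IN. \<exists>\<tau>\<in>units_IN. \<alpha> = \<sigma> \<cdot> \<beta> \<cdot> \<tau>)"
  using IN.greenD_imp_greenJ[OF \<alpha> \<beta>] greenJ_imp_unit_sandwich[OF n2 \<alpha> \<beta>]
    IN.unit_sandwich_greenD[OF _ _ \<beta>] by (metis units_IN_eq)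

lemma greenD_iff_greenJ:
  assumes n2: "CARD('n) \<ge> 2" and \<alpha>: "(\<alpha> :: nat ^ 'n \<rightharpoonup> nat ^ 'n) \<in> INinf" and \<beta>: "\<beta> \<in> INinf"
  shows "greenD INinf (\<cdot>) \<alpha> \<beta> \<longleftrightarrow> greenJ INinf (\<cdot>) \<alpha> \<beta>"
  using IN.greenD_imp_greenJ[OF \<alpha> \<beta>] greenJ_imp_unit_sandwich[OF n2 \<alpha> \<beta>]
    greenD_iff_unit_sandwich[OF n2 \<alpha> \<beta>] by blast

lemma idempotent_le_Iden:
  assumes "e \<in> INinf" "e \<cdot> e = e" shows "e \<subseteq>\<^sub>m Iden"
proof (rule map_le_def[THEN iffD2], rule ballI)
  fix x assume "x \<in> dom e"
  then obtain y where y: "e x = Some y" by blast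
  then have "e y = Some y" using assms(2) by (metis rcomp_def map_comp_simps(2))
  then have "y = x" using y INinfD(3)[OF assms(1)] by (metis domI inj_onD)
  then show "e x = Iden x" using y \<open>x \<in> dom e\<close> INinfD(1)[OF assms(1)] by (auto simp: Iden_def)
qed

lemma finite_greenJ_class:
  assumes n2: "CARD('n) \<ge> 2" and \<alpha>: "(\<alpha> :: nat ^ 'n \<rightharpoonup> nat ^ 'n) \<in> INinf"
  shows "finite {\<beta> \<in> INinf. greenJ INinf (\<cdot>) \<alpha> \<beta>}"
proof (rule finite_subset)
  show "{\<beta> \<in> INinf. greenJ INinf (\<cdot>) \<alpha> \<beta>} \<subseteq> (\<lambda>(\<sigma>, \<tau>). \<sigma> \<cdot> \<alpha> \<cdot> \<tau>) ` (units_IN \<times> units_IN)"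
  proof
    fix \<beta> assume "\<beta> \<in> {\<beta> \<in> INinf. greenJ INinf (\<cdot>) \<alpha> \<beta>}"
    then have "\<beta> \<in> INinf" "greenJ INinf (\<cdot>) \<beta> \<alpha>" by (auto simp: greenJ_def)
    then obtain \<sigma> \<tau> where "\<sigma> \<in> units_IN" "\<tau> \<in> units_IN" "\<beta> = \<sigma> \<cdot> \<alpha> \<cdot> \<tau>"
      using greenJ_imp_unit_sandwich[OF n2 _ \<alpha>] by blast
    then show "\<beta> \<in> (\<lambda>(\<sigma>, \<tau>). \<sigma> \<cdot> \<alpha> \<cdot> \<tau>) ` (units_IN \<times> units_IN)"
      by (auto intro: image_eqI[where x = "(\<sigma>, \<tau>)"])
  qed
  show "finite ((\<lambda>(\<sigma>, \<tau>). \<sigma> \<cdot> \<alpha> \<cdot> \<tau>) ` (units_IN \<times> units_IN))"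
    using finite_units_IN[OF n2] by simp
qed

lemma greenJ_natord_imp_eq:
  assumes n2: "CARD('n) \<ge> 2" and "(\<alpha> :: nat ^ 'n \<rightharpoonup> nat ^ 'n) \<in> INinf" "\<beta> \<in> INinf"
    and "greenJ INinf (\<cdot>) \<alpha> \<beta>" "natord INinf (\<cdot>) \<alpha> \<beta>"
  shows "\<alpha> = \<beta>"
proof (rule map_le_eq_if_defect_le)
  obtain e where e: "e \<in> INinf" "e \<cdot> e = e" "\<alpha> = \<beta> \<cdot> e" using assms(5) unfolding natord_def by blast
  have "\<beta> \<cdot> e \<subseteq>\<^sub>m \<beta> \<cdot> Iden" by (rule rcomp_map_le_mono[OF map_le_refl idempotent_le_Iden[OF e(1,2)]])
  then show "\<alpha> \<subseteq>\<^sub>m \<beta>" using e(3) rcomp_Iden[OF assms(3)] by simp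
  obtain \<sigma> \<tau> where "\<sigma> \<in> units_IN" "\<tau> \<in> units_IN" "\<alpha> = \<sigma> \<cdot> \<beta> \<cdot> \<tau>"
    using greenJ_imp_unit_sandwich[OF n2 assms(2-4)] by blast
  then show "defect \<alpha> \<le> defect \<beta>" using defect_unit_sandwich[OF n2 assms(3)] by simp
qed (use assms in auto)

theorem theorem3p8:
  fixes \<alpha> \<beta> :: "nat ^ 'n \<rightharpoonup> nat ^ 'n"
  assumes n2: "CARD('n) \<ge> 2"
    and a: "\<alpha> \<in> INinf" and b: "\<beta> \<in> INinf"
  shows "(greenL INinf (\<cdot>) \<alpha> \<beta> \<longleftrightarrow> (\<exists>\<sigma>\<in>units_IN. \<alpha> = \<sigma> \<cdot> \<beta>))
    \<and> (greenR INinf (\<cdot>) \<alpha> \<beta> \<longleftrightarrow> (\<exists>\<sigma>\<in>units_IN. \<alpha> = \<beta> \<cdot> \<sigma>))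
    \<and> (greenH INinf (\<cdot>) \<alpha> \<beta> \<longleftrightarrow> (\<exists>\<sigma>1\<in>units_IN. \<exists>\<sigma>2\<in>units_IN. \<alpha> = \<sigma>1 \<cdot> \<beta> \<and> \<alpha> = \<beta> \<cdot> \<sigma>2))
    \<and> (greenD INinf (\<cdot>) \<alpha> \<beta> \<longleftrightarrow> (\<exists>\<sigma>1\<in>units_IN. \<exists>\<sigma>2\<in>units_IN. \<alpha> = \<sigma>1 \<cdot> \<beta> \<cdot> \<sigma>2))
    \<and> (\<forall>x\<in>(INinf :: (nat ^ 'n \<rightharpoonup> nat ^ 'n) set). \<forall>y\<in>INinf.
          greenD INinf (\<cdot>) x y \<longleftrightarrow> greenJ INinf (\<cdot>) x y)
    \<and> (\<forall>x\<in>(INinf :: (nat ^ 'n \<rightharpoonup> nat ^ 'n) set).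
          finite {y\<in>INinf. greenJ INinf (\<cdot>) x y}
          \<and> (\<forall>y\<in>{y\<in>INinf. greenJ INinf (\<cdot>) x y}. \<forall>z\<in>{z\<in>INinf. greenJ INinf (\<cdot>) x z}.
               natord INinf (\<cdot>) y z \<longrightarrow> y = z))"
proof (intro conjI ballI impI)
  show "greenL INinf (\<cdot>) \<alpha> \<beta> \<longleftrightarrow> (\<exists>\<sigma>\<in>units_IN. \<alpha> = \<sigma> \<cdot> \<beta>)"
    by (rule greenL_iff_unit[OF n2 a b])
  show "greenR INinf (\<cdot>) \<alpha> \<beta> \<longleftrightarrow> (\<exists>\<sigma>\<in>units_IN. \<alpha> = \<beta> \<cdot> \<sigma>)"
    by (rule greenR_iff_unit[OF n2 a b])
  show "greenH INinf (\<cdot>) \<alpha> \<beta> \<longleftrightarrow> (\<exists>\<sigma>1\<in>units_IN. \<exists>\<sigma>2\<in>units_IN. \<alpha> = \<sigma>1 \<cdot> \<beta> \<and> \<alpha> = \<beta> \<cdot> \<sigma>2)"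
    unfolding greenH_def greenL_iff_unit[OF n2 a b] greenR_iff_unit[OF n2 a b] by blast
  show "greenD INinf (\<cdot>) \<alpha> \<beta> \<longleftrightarrow> (\<exists>\<sigma>1\<in>units_IN. \<exists>\<sigma>2\<in>units_IN. \<alpha> = \<sigma>1 \<cdot> \<beta> \<cdot> \<sigma>2)"
    by (rule greenD_iff_unit_sandwich[OF n2 a b])
  show "greenD INinf (\<cdot>) x y \<longleftrightarrow> greenJ INinf (\<cdot>) x y" if "x \<in> INinf" "y \<in> INinf" for x y :: "nat ^ 'n \<rightharpoonup> nat ^ 'n"
    using greenD_iff_greenJ[OF n2 that] .
  show "finite {y \<in> INinf. greenJ INinf (\<cdot>) x y}" if "x \<in> INinf" for x :: "nat ^ 'n \<rightharpoonup> nat ^ 'n"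
    using finite_greenJ_class[OF n2 that] .
  show "y = z" if "y \<in> {y \<in> INinf. greenJ INinf (\<cdot>) x y}" "z \<in> {z \<in> INinf. greenJ INinf (\<cdot>) x z}"
    and "natord INinf (\<cdot>) y z" for x y z :: "nat ^ 'n \<rightharpoonup> nat ^ 'n"
    using greenJ_natord_imp_eq[OF n2, of y z] that by (simp add: greenJ_def)
qed

end
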